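(* Let $a,b$ be positive integers with $\gcd(a,b)=1$. For all $\pi\in\mathcal{D}_{b,-a}(a,b)$, $\widetilde\rho(\tilde f(\pi))=\rho_{\mathrm{AHJ}}(f(\pi))$.
   Context: Partitions are drawn in English convention in the first quadrant; a partition fitting in the $a\times b$ rectangle has as frontier a lattice path from $(0,0)$ to $(b,a)$ with unit north (N) and east (E) steps, its diagram being the unit squares above and to the left of the path. For a word $u$ with finitely many N's, $\mathrm{ptn}(u)$ is the partition whose parts are, for each N of $u$, the number of E's preceding it (zero parts discarded). The hook-length of a cell $c$ is the number of cells among $c$, the cells below it in its column and those to its right in its row. The $(b,-a)$-level of a lattice point $(x,y)$ is $by-ax$; a unit square $[x,x+1]\times[y,y+1]$ has the level of its southeast corner. Under the west-south convention, a step gets the level of its starting point. $\mathcal{D}_{b,-a}(a,b)$ is the set of partitions with at most $a$ parts, each at most $b$, whose frontier path visits only points of nonnegative level. For $\pi\in\mathcal{D}_{b,-a}(a,b)$ let $L(\pi)$ be the set of levels of unit squares lying above the line $by=ax$ and below the frontier path of $\pi$ (distinct positive integers). $f(\pi)$ is the unique partition whose first-column hook-lengths are exactly the elements of $L(\pi)$. Let $z=z_0z_1\cdots$ with $z_0=\mathrm{E}$ and, for $i>0$, $z_i=\mathrm{N}$ iff $i\in L(\pi)$ (else $\mathrm{E}$); $\tilde f(\pi)=\mathrm{ptn}(z)$. Let $y$ be the subword of $z$ of those $z_i$ ($i\ge0$) such that $i+a$ is the west-south level of some step of the frontier path of $\pi$; $\widetilde\rho(\tilde f(\pi))=\mathrm{ptn}(y)$.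 $\rho_{\mathrm{AHJ}}(f(\pi))$ is the partition having one row for each row of $\nu=f(\pi)$ whose first-column hook-length equals the level of a square lying directly east of a north step of the frontier path of $\pi$ (the square $[x,x+1]\times[y,y+1]$ for a north step from $(x,y)$ to $(x,y+1)$), that row having length equal to the number of cells in the corresponding row of $\nu$ with hook-length at most $b$. *)

theory Defs
  imports Main
begin

(* Words in the letters N and E are bool lists/functions: True = N (north), False = E (east). *)

definition is_partition :: "nat list \<Rightarrow> bool" where
  "is_partition xs \<longleftrightarrow> sorted (rev xs) \<and> 0 \<notin> set xs"

definition normalize :: "nat list \<Rightarrow> nat list" where
  "normalize xs = rev (sort (filter (\<lambda>p. 0 < p) xs))"

definition ptn :: "bool list \<Rightarrow> nat list" where
  "ptn w = normalize (map (\<lambda>k. length (filter Not (take k w)))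
                          (filter (\<lambda>k. w ! k) [0..<length w]))"

(* ptn(u) for an infinite word with finitely many N's (E's after the last N are irrelevant) *)
definition ptn_inf :: "(nat \<Rightarrow> bool) \<Rightarrow> nat list" where
  "ptn_inf u = ptn (map u [0..<Suc (Max {i. u i})])"

definition padded :: "nat \<Rightarrow> nat list \<Rightarrow> nat list" where
  "padded a \<pi> = \<pi> @ replicate (a - length \<pi>) 0"

fun fr :: "nat \<Rightarrow> nat \<Rightarrow> nat list \<Rightarrow> bool list" where
  "fr b p [] = replicate (b - p) False"
| "fr b p (x # xs) = replicate (x - p) False @ True # fr b x xs"

(* frontier path from (0,0) to (b,a) of a partition in the a x b rectangle (English convention,
   first row on top): rows are traversed bottom to top *)
definition frontier :: "nat \<Rightarrow> nat \<Rightarrow> nat list \<Rightarrow> bool list" where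
  "frontier a b \<pi> = fr b 0 (rev (padded a \<pi>))"

definition point :: "bool list \<Rightarrow> nat \<Rightarrow> nat \<times> nat" where
  "point w k = (length (filter Not (take k w)), length (filter id (take k w)))"

definition level :: "nat \<Rightarrow> nat \<Rightarrow> nat \<times> nat \<Rightarrow> int" where
  "level a b P = int b * int (snd P) - int a * int (fst P)"

(* level of the unit square [x,x+1] x [y,y+1]: level of its southeast corner *)
definition sq_level :: "nat \<Rightarrow> nat \<Rightarrow> nat \<times> nat \<Rightarrow> int" where
  "sq_level a b S = level a b (Suc (fst S), snd S)"

definition Dset :: "nat \<Rightarrow> nat \<Rightarrow> nat list set" where
  "Dset a b = {\<pi>. is_partition \<pi> \<and> length \<pi> \<le> a \<and> (\<forall>p\<in>set \<pi>. p \<le> b) \<and>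
       (\<forall>k \<le> length (frontier a b \<pi>). 0 \<le> level a b (point (frontier a b \<pi>) k))}"

(* unit square [x,x+1]x[y,y+1] of the rectangle belongs to the diagram of \<pi>:
   its row (counted from the top, 0-based) is a-1-y *)
definition in_diagram :: "nat \<Rightarrow> nat list \<Rightarrow> nat \<times> nat \<Rightarrow> bool" where
  "in_diagram a \<pi> S \<longleftrightarrow> fst S < padded a \<pi> ! (a - 1 - snd S)"

definition Lset :: "nat \<Rightarrow> nat \<Rightarrow> nat list \<Rightarrow> nat set" where
  "Lset a b \<pi> = {nat (sq_level a b (x, y)) | x y. x < b \<and> y < a \<and>
       \<not> in_diagram a \<pi> (x, y) \<and> 0 < sq_level a b (x, y)}"

definition conj :: "nat list \<Rightarrow> nat \<Rightarrow> nat" where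
  "conj \<nu> j = length (filter (\<lambda>p. j < p) \<nu>)"

(* hook length of cell in row i, column j (both 0-based; requires j < \<nu>!i) *)
definition hook :: "nat list \<Rightarrow> nat \<Rightarrow> nat \<Rightarrow> nat" where
  "hook \<nu> i j = (\<nu> ! i - j) + (conj \<nu> j - i) - 1"

definition first_col_hooks :: "nat list \<Rightarrow> nat list" where
  "first_col_hooks \<nu> = map (\<lambda>i. hook \<nu> i 0) [0..<length \<nu>]"

definition f_map :: "nat \<Rightarrow> nat \<Rightarrow> nat list \<Rightarrow> nat list" where
  "f_map a b \<pi> = (THE \<nu>. is_partition \<nu> \<and> set (first_col_hooks \<nu>) = Lset a b \<pi>)"

definition zword :: "nat \<Rightarrow> nat \<Rightarrow> nat list \<Rightarrow> nat \<Rightarrow> bool" where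
  "zword a b \<pi> i = (0 < i \<and> i \<in> Lset a b \<pi>)"

definition f_tilde :: "nat \<Rightarrow> nat \<Rightarrow> nat list \<Rightarrow> nat list" where
  "f_tilde a b \<pi> = ptn_inf (zword a b \<pi>)"

definition step_levels :: "nat \<Rightarrow> nat \<Rightarrow> nat list \<Rightarrow> int set" where
  "step_levels a b \<pi> = {level a b (point (frontier a b \<pi>) k) | k. k < length (frontier a b \<pi>)}"

definition yword :: "nat \<Rightarrow> nat \<Rightarrow> nat list \<Rightarrow> bool list" where
  "yword a b \<pi> = map (zword a b \<pi>)
      (sorted_list_of_set {i. int i + int a \<in> step_levels a b \<pi>})"

definition rho_tilde_f_tilde :: "nat \<Rightarrow> nat \<Rightarrow> nat list \<Rightarrow> nat list" where
  "rho_tilde_f_tilde a b \<pi> = ptn (yword a b \<pi>)"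

(* levels of squares lying directly east of a north step of the frontier path *)
definition east_levels :: "nat \<Rightarrow> nat \<Rightarrow> nat list \<Rightarrow> int set" where
  "east_levels a b \<pi> = {sq_level a b (point (frontier a b \<pi>) k) | k.
       k < length (frontier a b \<pi>) \<and> frontier a b \<pi> ! k}"

definition rho_AHJ :: "nat \<Rightarrow> nat \<Rightarrow> nat list \<Rightarrow> nat list \<Rightarrow> nat list" where
  "rho_AHJ a b \<pi> \<nu> = normalize
     (map (\<lambda>i. card {j. j < \<nu> ! i \<and> hook \<nu> i j \<le> b})
        (filter (\<lambda>i. int (hook \<nu> i 0) \<in> east_levels a b \<pi>) [0..<length \<nu>]))"

end

theory Submission
  imports Defs "HOL-Library.Multiset"
begin

text \<open>
  Since a and b are coprime, a square in a column x < b is determined by its level, and the squares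
  of one column have levels differing by multiples of b. Reading the word z at the positions picked
  out by the steps of the frontier, a north step contributes the level of the square east of it,
  which lies in L(\<pi>) (a letter N), and an east step the level of the square directly above it,
  which lies inside the diagram (a letter E). So the parts of the left-hand side belong to the
  first-column hooks h of f(\<pi>) that occur east of north steps, exactly the rows used by
  \<rho>_AHJ, and the part for h counts the east steps whose square has level below h. Shifting
  these levels up their columns into the window [h - b, h) is a bijection onto the
  non-elements of L(\<pi>) in that window. On the other side, the hook lengths in the row of f(\<pi>)
  with first-column hook h are the numbers h - m with m < h not in L(\<pi>), so the cells of hook
  length at most b are counted by the same window.
\<close>

section \<open>Multisets of parts and the partition of a word\<close>

lemma normalize_eq_if_mset_eq: "mset xs = mset ys \<Longrightarrow> normalize xs = normalize ys"
  unfolding normalize_def by (metis mset_filter sort_key_def sorted_sort_id properties_for_sort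
    sorted_sort mset_sort)

lemma mset_sorted_list_of_set: "mset (sorted_list_of_set A) = mset_set A"
  by (metis mset_sorted_list_of_multiset sorted_list_of_mset_set)

lemma mset_map_filter_upt:
  "mset (map f (filter P [0..<n])) = image_mset f (mset_set {k. k < n \<and> P k})"
proof -
  have "{x \<in> {0..<n}. P x} = {k. k < n \<and> P k}" by auto
  thus ?thesis by simp
qed

lemma sorted_list_of_set_filter:
  fixes A :: "'a::linorder set"
  assumes "finite A"
  shows "sorted_list_of_set {x \<in> A. P x} = filter P (sorted_list_of_set A)"
proof -
  have "set (filter P (sorted_list_of_set A)) = {x \<in> A. P x}" using assms by auto
  moreover have "sorted (filter P (sorted_list_of_set A))" "distinct (filter P (sorted_list_of_set A))"
    by (simp_all add: sorted_wrt_filter)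
  ultimately show ?thesis by (metis sorted_list_of_set_sort_remdups distinct_remdups_id sorted_sort_id)
qed

lemma set_take_strict_sorted:
  fixes xs :: "'a::linorder list"
  assumes sorted: "sorted_wrt (<) xs" and k: "k < length xs"
  shows "set (take k xs) = {x \<in> set xs. x < xs ! k}"
proof -
  have less_iff: "xs ! j < xs ! k \<longleftrightarrow> j < k" if "j < length xs" for j
    using sorted_wrt_nth_less[OF sorted] k that by (metis less_asym linorder_neqE)
  have "set (take k xs) = (!) xs ` {..<k}"
    using nth_image[of k xs] k by (simp add: atLeast0LessThan)
  also have "\<dots> = {x \<in> set xs. x < xs ! k}"
  proof (intro equalityI subsetI)
    fix x assume "x \<in> (!) xs ` {..<k}"
    then obtain j where j: "j < k" "x = xs ! j" by blast
    have "j < length xs" using j(1) k by linarith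
    thus "x \<in> {x \<in> set xs. x < xs ! k}" using less_iff j by simp
  next
    fix x assume "x \<in> {x \<in> set xs. x < xs ! k}"
    then obtain j where "j < length xs" "x = xs ! j" "xs ! j < xs ! k" by (auto simp: in_set_conv_nth)
    thus "x \<in> (!) xs ` {..<k}" using less_iff by blast
  qed
  finally show ?thesis .
qed

lemma ptn_map_sorted:
  fixes xs :: "'a::linorder list"
  assumes "sorted_wrt (<) xs"
  shows "ptn (map P xs) = normalize (map (\<lambda>h. card {x \<in> set xs. x < h \<and> \<not> P x}) (filter P xs))"
proof -
  let ?F = "\<lambda>h. card {x \<in> set xs. x < h \<and> \<not> P x}"
  have dist: "distinct xs" using assms by (simp add: strict_sorted_iff)
  have E_count: "length (filter Not (take k (map P xs))) = ?F (xs ! k)" if "k < length xs" for k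
  proof -
    have "length (filter Not (take k (map P xs))) = length (filter (\<lambda>x. \<not> P x) (take k xs))"
      by (simp add: take_map filter_map length_filter_map comp_def)
    also have "\<dots> = card {x \<in> set (take k xs). \<not> P x}"
      using distinct_take[OF dist] by (simp add: distinct_length_filter Int_def conj_commute)
    finally show ?thesis using set_take_strict_sorted[OF assms that] by (simp add: conj_commute conj_left_commute)
  qed
  have "map (\<lambda>k. length (filter Not (take k (map P xs))))
          (filter ((!) (map P xs)) [0..<length (map P xs)])
      = map (?F \<circ> (!) xs) (filter (P \<circ> (!) xs) [0..<length xs])"
  proof -
    have "filter ((!) (map P xs)) [0..<length (map P xs)] = filter (P \<circ> (!) xs) [0..<length xs]"
      by (rule filter_cong) auto
    thus ?thesis using E_count by (simp add: comp_def)
  qed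
  also have "\<dots> = map ?F (filter P xs)"
    by (metis filter_map map_map map_nth)
  finally show ?thesis unfolding ptn_def by (rule arg_cong)
qed

section \<open>First-column hooks\<close>

lemma partition_nth_antimono:
  assumes "is_partition \<nu>" "k \<le> l" "l < length \<nu>"
  shows "\<nu> ! l \<le> \<nu> ! k"
proof -
  have "rev \<nu> ! (length \<nu> - 1 - l) \<le> rev \<nu> ! (length \<nu> - 1 - k)"
    using assms by (intro sorted_nth_mono) (auto simp: is_partition_def)
  thus ?thesis using assms(2,3) by (simp add: rev_nth)
qed

lemma is_partition_Cons:
  "is_partition (p # \<nu>) \<longleftrightarrow> is_partition \<nu> \<and> 0 < p \<and> (\<forall>x\<in>set \<nu>. x \<le> p)"
  unfolding is_partition_def by (auto simp: sorted_append)

lemma conj_eq_card: "conj \<nu> j = card {k. k < length \<nu> \<and> j < \<nu> ! k}"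
  unfolding conj_def by (simp add: length_filter_conv_card)

lemma conj_le_length: "conj \<nu> j \<le> length \<nu>"
  unfolding conj_def by simp

lemma conj_antimono: "j1 \<le> j2 \<Longrightarrow> conj \<nu> j2 \<le> conj \<nu> j1"
  unfolding conj_eq_card by (intro card_mono) auto

lemma conj_0: "is_partition \<nu> \<Longrightarrow> conj \<nu> 0 = length \<nu>"
  unfolding conj_def is_partition_def by (metis filter_True gr0I)

lemma less_nth_iff_less_conj:
  assumes p: "is_partition \<nu>" and k: "k < length \<nu>"
  shows "j < \<nu> ! k \<longleftrightarrow> k < conj \<nu> j"
proof
  assume "j < \<nu> ! k"
  hence "{..k} \<subseteq> {k'. k' < length \<nu> \<and> j < \<nu> ! k'}"
    using partition_nth_antimono[OF p] k by (auto intro: less_le_trans)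
  hence "card {..k} \<le> conj \<nu> j" unfolding conj_eq_card by (intro card_mono) auto
  thus "k < conj \<nu> j" by simp
next
  assume h: "k < conj \<nu> j"
  show "j < \<nu> ! k"
  proof (rule ccontr)
    assume "\<not> j < \<nu> ! k"
    hence "{k'. k' < length \<nu> \<and> j < \<nu> ! k'} \<subseteq> {..<k}"
      using partition_nth_antimono[OF p] k by (auto simp: not_less) (meson le_less_trans not_le order_trans)
    hence "conj \<nu> j \<le> card {..<k}" unfolding conj_eq_card by (intro card_mono) auto
    thus False using h by simp
  qed
qed

lemma hook_0: "is_partition \<nu> \<Longrightarrow> i < length \<nu> \<Longrightarrow> hook \<nu> i 0 = \<nu> ! i + length \<nu> - 1 - i"
  unfolding hook_def using conj_0 by auto

lemma length_first_col_hooks [simp]: "length (first_col_hooks \<nu>) = length \<nu>"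
  unfolding first_col_hooks_def by simp

lemma nth_first_col_hooks: "i < length \<nu> \<Longrightarrow> first_col_hooks \<nu> ! i = hook \<nu> i 0"
  unfolding first_col_hooks_def by simp

lemma first_col_hooks_strict_antimono:
  "is_partition \<nu> \<Longrightarrow> i < j \<Longrightarrow> j < length \<nu> \<Longrightarrow> hook \<nu> j 0 < hook \<nu> i 0"
  using hook_0 partition_nth_antimono[of \<nu> i j] by auto

lemma inj_on_first_col_hook:
  "is_partition \<nu> \<Longrightarrow> inj_on (\<lambda>i. hook \<nu> i 0) {..<length \<nu>}"
  by (rule inj_onI) (metis first_col_hooks_strict_antimono lessThan_iff linorder_neqE_nat less_irrefl)

lemma strict_sorted_rev_first_col_hooks:
  assumes "is_partition \<nu>"
  shows "sorted_wrt (<) (rev (first_col_hooks \<nu>))"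
proof -
  have "sorted_wrt (>) (first_col_hooks \<nu>)"
    unfolding sorted_wrt_iff_nth_less
    using assms by (simp add: nth_first_col_hooks first_col_hooks_strict_antimono)
  thus ?thesis by (simp add: sorted_wrt_rev)
qed

lemma distinct_first_col_hooks: "is_partition \<nu> \<Longrightarrow> distinct (first_col_hooks \<nu>)"
  using strict_sorted_rev_first_col_hooks strict_sorted_iff by (metis distinct_rev)

lemma first_col_hooks_Cons:
  assumes "is_partition (p # \<nu>)"
  shows "first_col_hooks (p # \<nu>) = (p + length \<nu>) # first_col_hooks \<nu>"
proof (rule nth_equalityI)
  have "is_partition \<nu>" using assms by (simp add: is_partition_Cons)
  then show "first_col_hooks (p # \<nu>) ! i = ((p + length \<nu>) # first_col_hooks \<nu>) ! i"
    if "i < length (first_col_hooks (p # \<nu>))" for i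
    using that assms by (cases i) (auto simp: nth_first_col_hooks hook_0)
qed simp

lemma first_col_hooks_inject:
  assumes "is_partition \<nu>1" "is_partition \<nu>2" "set (first_col_hooks \<nu>1) = set (first_col_hooks \<nu>2)"
  shows "\<nu>1 = \<nu>2"
proof -
  have "rev (first_col_hooks \<nu>1) = rev (first_col_hooks \<nu>2)"
    using assms strict_sorted_rev_first_col_hooks
    by (intro sorted_distinct_set_unique) (auto simp: strict_sorted_iff)
  hence hooks: "first_col_hooks \<nu>1 = first_col_hooks \<nu>2" by simp
  hence len: "length \<nu>1 = length \<nu>2" by (metis length_first_col_hooks)
  show ?thesis
  proof (rule nth_equalityI[OF len])
    fix i assume i: "i < length \<nu>1"
    have "hook \<nu>1 i 0 = hook \<nu>2 i 0"
      using hooks i len by (metis nth_first_col_hooks)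
    thus "\<nu>1 ! i = \<nu>2 ! i"
      using i len hook_0[OF assms(1) i] hook_0[OF assms(2)] by simp
  qed
qed

lemma exists_partition_first_col_hooks:
  assumes "finite L" "0 \<notin> L"
  shows "\<exists>\<nu>. is_partition \<nu> \<and> set (first_col_hooks \<nu>) = L"
  using assms
proof (induction "card L" arbitrary: L)
  case 0
  then show ?case by (intro exI[of _ "[]"]) (simp add: is_partition_def first_col_hooks_def)
next
  case (Suc n)
  define M where "M = Max L"
  have ne: "L \<noteq> {}" using Suc.hyps(2) by auto
  have M: "M \<in> L" using Suc.prems(1) ne by (simp add: M_def)
  have below_M: "x < M" if "x \<in> L - {M}" for x
    using that Suc.prems(1) by (auto simp: M_def order.not_eq_order_implies_strict)
  have card: "card (L - {M}) = n" using Suc.hyps(2) M Suc.prems(1) by simp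
  obtain \<nu> where \<nu>: "is_partition \<nu>" "set (first_col_hooks \<nu>) = L - {M}"
    using Suc.hyps(1)[OF card[symmetric]] Suc.prems by auto
  have len: "length \<nu> = n"
    using card \<nu> distinct_card[OF distinct_first_col_hooks[OF \<nu>(1)]] by simp
  have "card L \<le> M"
  proof -
    have "L \<subseteq> {1..M}" using Suc.prems Max_ge by (fastforce simp: M_def Suc_le_eq)
    thus ?thesis using card_mono[of "{1..M}" L] by simp
  qed
  hence M_gt: "n < M" using Suc.hyps(2) by simp
  have "x + n \<le> M" if "x \<in> set \<nu>" for x
  proof -
    obtain i where i: "i < n" "x = \<nu> ! i" using \<open>x \<in> set \<nu>\<close> len by (auto simp: in_set_conv_nth)
    have "hook \<nu> 0 0 \<in> L - {M}" using \<nu>(2) i len by (metis nth_first_col_hooks nth_mem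
      length_first_col_hooks gr_zeroI less_nat_zero_code)
    moreover have "x \<le> \<nu> ! 0" using partition_nth_antimono[OF \<nu>(1), of 0 i] i len by simp
    ultimately show ?thesis using below_M hook_0[OF \<nu>(1), of 0] i len by fastforce
  qed
  hence part: "is_partition ((M - n) # \<nu>)"
    using \<nu>(1) M_gt by (fastforce simp: is_partition_Cons)
  have "set (first_col_hooks ((M - n) # \<nu>)) = L"
    using first_col_hooks_Cons[OF part] \<nu>(2) M len M_gt by auto
  with part show ?case by blast
qed

lemma the_partition_first_col_hooks:
  assumes "finite L" "0 \<notin> L"
  defines "\<nu> \<equiv> THE \<nu>. is_partition \<nu> \<and> set (first_col_hooks \<nu>) = L"
  shows "is_partition \<nu>" "set (first_col_hooks \<nu>) = L"
proof -
  have "\<exists>!\<nu>. is_partition \<nu> \<and> set (first_col_hooks \<nu>) = L"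
    using exists_partition_first_col_hooks[OF assms(1,2)] first_col_hooks_inject by metis
  from theI'[OF this] show "is_partition \<nu>" "set (first_col_hooks \<nu>) = L"
    unfolding \<nu>_def by auto
qed

(* first_col_gap \<nu> enumerates the complement of the first-column hooks (the abacus picture) *)
definition first_col_gap :: "nat list \<Rightarrow> nat \<Rightarrow> nat" where
  "first_col_gap \<nu> j = j + length \<nu> - conj \<nu> j"

lemma first_col_gap_strict_mono: "j1 < j2 \<Longrightarrow> first_col_gap \<nu> j1 < first_col_gap \<nu> j2"
  using conj_antimono[of j1 j2 \<nu>] conj_le_length[of \<nu> j1] conj_le_length[of \<nu> j2]
  unfolding first_col_gap_def by linarith

lemma inj_first_col_gap: "inj (first_col_gap \<nu>)"
  by (rule strict_mono_imp_inj_on) (simp add: strict_mono_def first_col_gap_strict_mono)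

lemma first_col_gap_not_hook:
  assumes p: "is_partition \<nu>"
  shows "first_col_gap \<nu> j \<notin> set (first_col_hooks \<nu>)"
proof
  assume "first_col_gap \<nu> j \<in> set (first_col_hooks \<nu>)"
  then obtain k where k: "k < length \<nu>" "first_col_gap \<nu> j = \<nu> ! k + length \<nu> - 1 - k"
    by (auto simp: in_set_conv_nth nth_first_col_hooks hook_0[OF p])
  show False
  proof (cases "k < conj \<nu> j")
    case True
    hence "j < \<nu> ! k" using less_nth_iff_less_conj[OF p k(1)] by simp
    thus False using k True conj_le_length[of \<nu> j] unfolding first_col_gap_def by linarith
  next
    case False
    hence "\<nu> ! k \<le> j" using less_nth_iff_less_conj[OF p k(1), of j] by (simp add: not_less)
    thus False using k False conj_le_length[of \<nu> j] unfolding first_col_gap_def by linarith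
  qed
qed

lemma hook_eq_diff_first_col_gap:
  assumes p: "is_partition \<nu>" and i: "i < length \<nu>" and j: "j < \<nu> ! i"
  shows "first_col_gap \<nu> j < hook \<nu> i 0" "hook \<nu> i j = hook \<nu> i 0 - first_col_gap \<nu> j"
  using less_nth_iff_less_conj[OF p i, of j] conj_le_length[of \<nu> j] j hook_0[OF p i]
  unfolding first_col_gap_def hook_def by auto

lemma card_non_hooks_below:
  assumes p: "is_partition \<nu>" and i: "i < length \<nu>"
  shows "card {m. m < hook \<nu> i 0 \<and> m \<notin> set (first_col_hooks \<nu>)} = \<nu> ! i"
proof -
  let ?n = "length \<nu>" and ?H = "hook \<nu> i 0" and ?h = "\<lambda>k. hook \<nu> k 0"
  let ?S = "set (first_col_hooks \<nu>) \<inter> {..<?H}"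
  have "?S = ?h ` {i<..<?n}"
  proof -
    have "?h k < ?H \<longleftrightarrow> i < k" if "k < ?n" for k
      using first_col_hooks_strict_antimono[OF p, of i k] first_col_hooks_strict_antimono[OF p, of k i]
        that i by (cases i k rule: linorder_cases) auto
    thus ?thesis by (auto simp: in_set_conv_nth nth_first_col_hooks) (metis nth_first_col_hooks)
  qed
  moreover have "card (?h ` {i<..<?n}) = ?n - 1 - i"
    by (subst card_image) (auto intro: inj_on_subset[OF inj_on_first_col_hook[OF p]])
  moreover have "{m. m < ?H \<and> m \<notin> set (first_col_hooks \<nu>)} = {..<?H} - ?S" by auto
  moreover have "card ({..<?H} - ?S) = ?H - card ?S" by (simp add: card_Diff_subset)
  ultimately have "card {m. m < ?H \<and> m \<notin> set (first_col_hooks \<nu>)} = ?H - (?n - 1 - i)"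
    by simp
  thus ?thesis using hook_0[OF p i] i by simp
qed

lemma first_col_gap_image:
  assumes p: "is_partition \<nu>" and i: "i < length \<nu>"
  shows "first_col_gap \<nu> ` {..<\<nu> ! i} = {m. m < hook \<nu> i 0 \<and> m \<notin> set (first_col_hooks \<nu>)}"
proof (rule card_subset_eq)
  show "first_col_gap \<nu> ` {..<\<nu> ! i} \<subseteq> {m. m < hook \<nu> i 0 \<and> m \<notin> set (first_col_hooks \<nu>)}"
    using hook_eq_diff_first_col_gap(1)[OF p i] first_col_gap_not_hook[OF p] by blast
  show "card (first_col_gap \<nu> ` {..<\<nu> ! i}) = card {m. m < hook \<nu> i 0 \<and> m \<notin> set (first_col_hooks \<nu>)}"
    using card_image[OF inj_on_subset[OF inj_first_col_gap subset_UNIV]]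
    by (simp add: card_non_hooks_below[OF p i])
qed simp

lemma card_row_hooks_le:
  assumes p: "is_partition \<nu>" and i: "i < length \<nu>"
  shows "card {j. j < \<nu> ! i \<and> hook \<nu> i j \<le> b} =
         card {m. m < hook \<nu> i 0 \<and> hook \<nu> i 0 \<le> m + b \<and> m \<notin> set (first_col_hooks \<nu>)}"
proof -
  have le_iff: "hook \<nu> i j \<le> b \<longleftrightarrow> hook \<nu> i 0 \<le> first_col_gap \<nu> j + b" if "j < \<nu> ! i" for j
    using hook_eq_diff_first_col_gap[OF p i that] by linarith
  have "first_col_gap \<nu> ` {j. j < \<nu> ! i \<and> hook \<nu> i j \<le> b}
      = {m \<in> first_col_gap \<nu> ` {..<\<nu> ! i}. hook \<nu> i 0 \<le> m + b}"
    using le_iff by auto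
  also have "\<dots> = {m. m < hook \<nu> i 0 \<and> hook \<nu> i 0 \<le> m + b \<and> m \<notin> set (first_col_hooks \<nu>)}"
    unfolding first_col_gap_image[OF p i] by auto
  finally have "first_col_gap \<nu> ` {j. j < \<nu> ! i \<and> hook \<nu> i j \<le> b}
      = {m. m < hook \<nu> i 0 \<and> hook \<nu> i 0 \<le> m + b \<and> m \<notin> set (first_col_hooks \<nu>)}" .
  thus ?thesis using card_image[OF inj_on_subset[OF inj_first_col_gap subset_UNIV]] by metis
qed

lemma mset_row_hook_counts:
  assumes p: "is_partition \<nu>"
  shows "mset (map (\<lambda>i. card {j. j < \<nu> ! i \<and> hook \<nu> i j \<le> b})
                 (filter (\<lambda>i. P (hook \<nu> i 0)) [0..<length \<nu>]))
       = image_mset (\<lambda>h. card {m. m < h \<and> h \<le> m + b \<and> m \<notin> set (first_col_hooks \<nu>)})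
                    (mset_set {h \<in> set (first_col_hooks \<nu>). P h})"
proof -
  let ?F = "\<lambda>h. card {m. m < h \<and> h \<le> m + b \<and> m \<notin> set (first_col_hooks \<nu>)}"
  let ?X = "{i. i < length \<nu> \<and> P (hook \<nu> i 0)}"
  have inj: "inj_on (\<lambda>i. hook \<nu> i 0) ?X"
    by (rule inj_on_subset[OF inj_on_first_col_hook[OF p]]) auto
  have img: "(\<lambda>i. hook \<nu> i 0) ` ?X = {h \<in> set (first_col_hooks \<nu>). P h}"
    unfolding first_col_hooks_def by auto
  have "mset (map (\<lambda>i. card {j. j < \<nu> ! i \<and> hook \<nu> i j \<le> b})
                 (filter (\<lambda>i. P (hook \<nu> i 0)) [0..<length \<nu>]))
      = image_mset (\<lambda>i. card {j. j < \<nu> ! i \<and> hook \<nu> i j \<le> b}) (mset_set ?X)"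
    by (rule mset_map_filter_upt)
  also have "\<dots> = image_mset (\<lambda>i. ?F (hook \<nu> i 0)) (mset_set ?X)"
    by (rule image_mset_cong) (simp add: card_row_hooks_le[OF p])
  also have "\<dots> = image_mset ?F (image_mset (\<lambda>i. hook \<nu> i 0) (mset_set ?X))"
    by (simp add: multiset.map_comp comp_def)
  also have "\<dots> = image_mset ?F (mset_set {h \<in> set (first_col_hooks \<nu>). P h})"
    using image_mset_mset_set[OF inj] img by simp
  finally show ?thesis .
qed

section \<open>Frontier paths and levels\<close>

lemma length_fr:
  "sorted (p # xs) \<Longrightarrow> \<forall>x\<in>set xs. x \<le> b \<Longrightarrow> length (fr b p xs) = length xs + (b - p)"
  by (induction xs arbitrary: p) auto

lemma nth_fr:
  assumes "sorted (p # xs)" "\<forall>x\<in>set xs. x \<le> b" "k < length xs + (b - p)"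
  shows "fr b p xs ! k \<longleftrightarrow> (\<exists>y<length xs. k = xs ! y - p + y)"
  using assms
proof (induction xs arbitrary: p k)
  case Nil
  then show ?case by simp
next
  case (Cons x xs)
  have px: "p \<le> x" and sorted: "sorted (x # xs)" using Cons.prems(1) by auto
  have "xs ! y - p + Suc y = (x - p) + Suc (xs ! y - x + y)" if "y < length xs" for y
  proof -
    have "x \<le> xs ! y" using sorted that by simp
    thus ?thesis using px by linarith
  qed
  hence positions: "(\<exists>y<length (x # xs). k = (x # xs) ! y - p + y) \<longleftrightarrow>
      k = x - p \<or> (\<exists>y<length xs. k = (x - p) + Suc (xs ! y - x + y))"
    by (auto simp: Ex_less_Suc2)
  show ?case
  proof (cases "k \<le> x - p")
    case True
    then show ?thesis using positions by (auto simp: nth_append)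
  next
    case False
    then obtain k' where k: "k = (x - p) + Suc k'" by (metis add_Suc_right less_imp_Suc_add not_le)
    have "k' < length xs + (b - x)" using Cons.prems k px by auto
    hence "fr b x xs ! k' \<longleftrightarrow> (\<exists>y<length xs. k' = xs ! y - x + y)"
      using Cons.IH sorted Cons.prems(2) by simp
    thus ?thesis using positions k by (simp add: nth_append)
  qed
qed

lemma sq_level_eq: "sq_level a b (x, y) = int b * int y - int a * (int x + 1)"
  unfolding sq_level_def level_def by simp

lemma sq_level_eq_level: "sq_level a b P = level a b P - int a"
  unfolding sq_level_def level_def by (simp add: algebra_simps)

lemma coprime_level_eq_imp_eq:
  fixes x x' y y' :: int and a b :: nat
  assumes "coprime a b" and "\<bar>x - x'\<bar> < int b"
    and "int b * y - int a * x = int b * y' - int a * x'"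
  shows "x = x'" "y = y'"
proof -
  have "int a * (x - x') = int b * (y - y')" using assms(3) by (simp add: algebra_simps)
  hence "int b dvd int a * (x - x')" by simp
  moreover have "coprime (int b) (int a)" using assms(1) by (simp add: coprime_commute)
  ultimately have dvd: "int b dvd x - x'" using coprime_dvd_mult_right_iff by blast
  show "x = x'"
  proof (rule ccontr)
    assume "x \<noteq> x'"
    hence "\<bar>int b\<bar> \<le> \<bar>x - x'\<bar>" using dvd_imp_le_int[OF _ dvd] by simp
    with assms(2) show False by simp
  qed
  with assms(2,3) show "y = y'" by simp
qed

lemma coprime_level_surj:
  fixes a b m :: nat
  assumes "coprime a b" and "0 < b"
  obtains X Y where "X < b" "int m = int b * Y - int a * (int X + 1)"
proof -
  obtain u v where uv: "u * int a + v * int b = 1"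
    using bezout_int[of "int a" "int b"] assms(1) by auto
  define r where "r = (- int m * u - 1) mod int b"
  define t where "t = (- int m * u - 1) div int b"
  have rt: "- int m * u - 1 = int b * t + r" unfolding r_def t_def by simp
  have r: "0 \<le> r" "r < int b" unfolding r_def using assms(2) by simp_all
  have "int a * (r + 1) = int a * (- int m * u - int b * t)"
    using rt by (simp add: algebra_simps)
  also have "\<dots> = - int m * (u * int a) - int a * int b * t"
    by (simp add: algebra_simps)
  also have "u * int a = 1 - v * int b" using uv by simp
  finally have "int m = int b * (int m * v - int a * t) - int a * (r + 1)"
    by (simp add: algebra_simps)
  with r show ?thesis by (intro that[of "nat r"]) auto
qed

lemma card_window_shift:
  fixes E :: "nat set"
  assumes b: "0 < b" and unique: "\<And>i1 i2 t1 t2. i1 \<in> E \<Longrightarrow> i2 \<in> E \<Longrightarrow> i1 + b * t1 = i2 + b * t2 \<Longrightarrow> i1 = i2"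
  shows "card {i \<in> E. i < h} = card {m. m < h \<and> h \<le> m + b \<and> (\<exists>i\<in>E. \<exists>t. m = i + b * t)}"
proof -
  \<comment> \<open>the element of i + b\<nat> in the window [h - b, h)\<close>
  define \<phi> where "\<phi> i = i + b * ((h - 1 - i) div b)" for i
  have window: "\<phi> i < h \<and> h \<le> \<phi> i + b" if "i < h" for i
  proof -
    have "b * ((h - 1 - i) div b) + (h - 1 - i) mod b = h - 1 - i" by simp
    moreover have "(h - 1 - i) mod b < b" using b by simp
    ultimately show ?thesis using that unfolding \<phi>_def by linarith
  qed
  have inj: "inj_on \<phi> {i \<in> E. i < h}"
    by (rule inj_onI) (use unique in \<open>auto simp: \<phi>_def\<close>)
  have img: "\<phi> ` {i \<in> E. i < h} = {m. m < h \<and> h \<le> m + b \<and> (\<exists>i\<in>E. \<exists>t. m = i + b * t)}"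
  proof (intro equalityI subsetI)
    fix m assume "m \<in> \<phi> ` {i \<in> E. i < h}"
    thus "m \<in> {m. m < h \<and> h \<le> m + b \<and> (\<exists>i\<in>E. \<exists>t. m = i + b * t)}"
      using window unfolding \<phi>_def by auto
  next
    fix m assume "m \<in> {m. m < h \<and> h \<le> m + b \<and> (\<exists>i\<in>E. \<exists>t. m = i + b * t)}"
    then obtain i t where m: "m < h" "h \<le> m + b" "i \<in> E" "m = i + b * t" by blast
    have "h - 1 - i = b * t + (h - 1 - m)" using m by simp
    moreover have "h - 1 - m < b" using m by simp
    ultimately have "(h - 1 - i) div b = t" using b by simp
    hence "\<phi> i = m" unfolding \<phi>_def using m by simp
    moreover have "i < h" using m by simp
    ultimately show "m \<in> \<phi> ` {i \<in> E. i < h}" using m(3) by blast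
  qed
  show ?thesis using card_image[OF inj] img by simp
qed

section \<open>The frontier of a partition in the rational Dyck region\<close>

locale rational_Dyck_path =
  fixes a b :: nat and \<pi> :: "nat list"
  assumes a_pos: "0 < a" and b_pos: "0 < b" and coprime: "coprime a b" and in_Dset: "\<pi> \<in> Dset a b"
begin

abbreviation path :: "bool list" where
  "path \<equiv> frontier a b \<pi>"

(* row ! y is the length of the row at height y, i.e. the abscissa of the north step leaving height y *)
definition row :: "nat list" where
  "row = rev (padded a \<pi>)"

definition north_count :: "nat \<Rightarrow> nat" where
  "north_count k = card {y. y < a \<and> row ! y + y < k}"

lemma length_row: "length row = a"
  using in_Dset unfolding row_def padded_def Dset_def by simp

lemma sorted_row: "sorted row"
  using in_Dset unfolding row_def padded_def Dset_def is_partition_def by (simp add: sorted_append)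

lemma row_le_b: "y < a \<Longrightarrow> row ! y \<le> b"
  using in_Dset nth_mem[of y row] length_row unfolding row_def padded_def Dset_def by auto

lemma row_mono: "y \<le> y' \<Longrightarrow> y' < a \<Longrightarrow> row ! y \<le> row ! y'"
  using sorted_row length_row by (simp add: sorted_iff_nth_mono)

lemma in_diagram_iff: "y < a \<Longrightarrow> in_diagram a \<pi> (x, y) \<longleftrightarrow> x < row ! y"
  using length_row unfolding in_diagram_def row_def by (simp add: rev_nth)

lemma north_pos_strict_mono: "y < y' \<Longrightarrow> y' < a \<Longrightarrow> row ! y + y < row ! y' + y'"
  using row_mono[of y y'] by simp

lemma north_pos_inj: "y < a \<Longrightarrow> y' < a \<Longrightarrow> row ! y + y = row ! y' + y' \<Longrightarrow> y = y'"
  by (metis north_pos_strict_mono linorder_neqE_nat less_irrefl)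

lemma length_path: "length path = a + b"
  and nth_path: "k < a + b \<Longrightarrow> path ! k \<longleftrightarrow> (\<exists>y<a. k = row ! y + y)"
proof -
  have "path = fr b 0 row" unfolding frontier_def row_def ..
  moreover have "sorted (0 # row)" "\<forall>x\<in>set row. x \<le> b"
    using sorted_row row_le_b length_row by (auto simp: in_set_conv_nth)
  ultimately show "length path = a + b" "k < a + b \<Longrightarrow> path ! k \<longleftrightarrow> (\<exists>y<a. k = row ! y + y)"
    using length_fr nth_fr length_row by auto
qed

lemma north_count_le_a: "north_count k \<le> a"
  unfolding north_count_def using card_mono[of "{..<a}" "{y. y < a \<and> row ! y + y < k}"] by auto

lemma less_north_count_iff: "y < a \<Longrightarrow> row ! y + y < k \<longleftrightarrow> y < north_count k"
proof
  assume y: "y < a" and "row ! y + y < k"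
  have "{..y} \<subseteq> {y. y < a \<and> row ! y + y < k}"
  proof
    fix z assume "z \<in> {..y}"
    hence "z \<le> y" by simp
    moreover have "row ! z \<le> row ! y" using row_mono[OF \<open>z \<le> y\<close> y] .
    ultimately show "z \<in> {y. y < a \<and> row ! y + y < k}" using y \<open>row ! y + y < k\<close> by simp
  qed
  hence "card {..y} \<le> north_count k" unfolding north_count_def by (intro card_mono) auto
  thus "y < north_count k" by simp
next
  assume y: "y < a" and "y < north_count k"
  show "row ! y + y < k"
  proof (rule ccontr)
    assume "\<not> row ! y + y < k"
    hence "{y. y < a \<and> row ! y + y < k} \<subseteq> {..<y}"
      using row_mono[of y] by (auto simp: not_less) (metis add_le_mono le_less_linear less_le_trans not_le)
    hence "north_count k \<le> card {..<y}" unfolding north_count_def by (intro card_mono) auto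
    thus False using \<open>y < north_count k\<close> by simp
  qed
qed

lemma north_count_le: "north_count k \<le> k"
proof (cases "north_count k")
  case (Suc y)
  hence "row ! y + y < k" using less_north_count_iff[of y k] north_count_le_a[of k] by simp
  thus ?thesis using Suc by simp
qed simp

lemma north_count_Suc:
  "north_count (Suc k) = north_count k + (if \<exists>y<a. k = row ! y + y then 1 else 0)"
proof -
  have split: "{y. y < a \<and> row ! y + y < Suc k}
      = {y. y < a \<and> row ! y + y < k} \<union> {y. y < a \<and> k = row ! y + y}" by auto
  have "card {y. y < a \<and> k = row ! y + y} = (if \<exists>y<a. k = row ! y + y then 1 else 0)"
  proof (cases "\<exists>y<a. k = row ! y + y")
    case True
    then obtain y where "y < a" "k = row ! y + y" by blast
    hence "{y. y < a \<and> k = row ! y + y} = {y}" using north_pos_inj by auto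
    thus ?thesis using True by simp
  qed auto
  thus ?thesis unfolding north_count_def split by (subst card_Un_disjoint) auto
qed

lemma north_count_0: "north_count 0 = 0"
  unfolding north_count_def by simp

lemma north_count_end: "north_count (a + b) = a"
proof -
  have "{y. y < a \<and> row ! y + y < a + b} = {..<a}" using row_le_b by fastforce
  thus ?thesis unfolding north_count_def by simp
qed

lemma north_count_north_pos: "y < a \<Longrightarrow> north_count (row ! y + y) = y"
proof -
  assume y: "y < a"
  have "{y'. y' < a \<and> row ! y' + y' < row ! y + y} = {..<y}"
    using y north_pos_strict_mono by (auto, metis linorder_neqE_nat order_less_asym)
  thus ?thesis unfolding north_count_def by simp
qed

lemma point_path: "k \<le> a + b \<Longrightarrow> point path k = (k - north_count k, north_count k)"
proof -
  assume k: "k \<le> a + b"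
  have "length (filter id (take k path)) = card {i. i < k \<and> take k path ! i}"
    using k length_path by (simp add: length_filter_conv_card min_def)
  also have "{i. i < k \<and> take k path ! i} = {i. i < k \<and> path ! i}" by auto
  also have "{i. i < k \<and> path ! i} = (\<lambda>y. row ! y + y) ` {y. y < a \<and> row ! y + y < k}"
    using nth_path k by auto
  also have "card \<dots> = north_count k"
    unfolding north_count_def by (rule card_image) (auto simp: inj_on_def intro: north_pos_inj)
  finally have north: "length (filter id (take k path)) = north_count k" .
  have "length (filter id (take k path)) + length (filter Not (take k path)) = k"
    using sum_length_filter_compl[of id "take k path"] k length_path by simp
  thus ?thesis unfolding point_def using north by simp
qed

lemma level_point_path_nonneg: "k \<le> a + b \<Longrightarrow> 0 \<le> level a b (point path k)"
  using in_Dset length_path unfolding Dset_def by auto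

lemma path_coords_mono:
  "k \<le> k' \<Longrightarrow> k - north_count k \<le> k' - north_count k' \<and> north_count k \<le> north_count k'"
proof (induction k' rule: dec_induct)
  case (step j)
  then show ?case using north_count_Suc[of j] north_count_le[of j] by (auto split: if_splits)
qed simp

lemma row_below_east_step: "y < north_count k \<Longrightarrow> row ! y \<le> k - north_count k"
proof -
  assume y: "y < north_count k"
  have top: "north_count k - 1 < a" using north_count_le_a[of k] y by simp
  have "row ! (north_count k - 1) + (north_count k - 1) < k"
    using less_north_count_iff[OF top] y by simp
  moreover have "row ! y \<le> row ! (north_count k - 1)" using row_mono top y by simp
  ultimately show ?thesis using y by simp
qed

context
  fixes k assumes k: "k < a + b" and east: "\<not> path ! k"
begin

lemma east_step_north_count_Suc: "north_count (Suc k) = north_count k"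
  using north_count_Suc nth_path k east by simp

lemma east_step_in_row: "north_count k < a \<Longrightarrow> k - north_count k < row ! north_count k"
  using less_north_count_iff[of "north_count k" k] nth_path[OF k] east north_count_le[of k] by auto

lemma east_step_column_lt_b: "k - north_count k < b"
proof (cases "north_count k < a")
  case True
  then show ?thesis using east_step_in_row row_le_b by fastforce
next
  case False
  then show ?thesis using north_count_le_a[of k] north_count_le[of k] k by simp
qed

lemma east_step_sq_level_nonneg: "0 \<le> sq_level a b (point path k)"
proof -
  have "point path (Suc k) = (Suc (k - north_count k), north_count k)"
    using point_path[of "Suc k"] k east_step_north_count_Suc north_count_le[of k] by simp
  thus ?thesis using level_point_path_nonneg[of "Suc k"] point_path[of k] k
    unfolding sq_level_def by simp
qed

end

lemma east_step_column_inj: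
  assumes "k1 < a + b" "k2 < a + b" "\<not> path ! k1" "\<not> path ! k2"
    and "k1 - north_count k1 = k2 - north_count k2"
  shows "k1 = k2"
proof -
  have less: "i - north_count i < j - north_count j" if "i < j" "i < a + b" "\<not> path ! i" for i j
    using path_coords_mono[of "Suc i" j] that east_step_north_count_Suc[of i] north_count_le[of i]
    by linarith
  show ?thesis using less[of k1 k2] less[of k2 k1] assms by (cases k1 k2 rule: linorder_cases) auto
qed

lemma east_step_column_surj:
  assumes X: "X < b"
  obtains k where "k < a + b" "\<not> path ! k" "k - north_count k = X"
proof -
  define k where "k = (LEAST k. X < k - north_count k)"
  have ex: "X < (a + b) - north_count (a + b)" using north_count_end X by simp
  have X_lt: "X < k - north_count k" using LeastI[of "\<lambda>k. X < k - north_count k", OF ex] k_def by simp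
  have "k \<le> a + b" using Least_le[of "\<lambda>k. X < k - north_count k", OF ex] k_def by simp
  moreover obtain j where j: "k = Suc j" using X_lt north_count_0 by (cases k) auto
  moreover have "\<not> X < j - north_count j" using not_less_Least[of j "\<lambda>k. X < k - north_count k"] j k_def by simp
  ultimately have "j < a + b" "\<not> path ! j \<and> j - north_count j = X"
    using X_lt north_count_Suc[of j] nth_path[of j] north_count_le[of j] by (auto split: if_splits)
  with that show ?thesis by blast
qed

lemma sq_level_inj:
  "x < b \<Longrightarrow> x' < b \<Longrightarrow> sq_level a b (x, y) = sq_level a b (x', y') \<Longrightarrow> x = x' \<and> y = y'"
  using coprime_level_eq_imp_eq[OF coprime, of "int x + 1" "int x' + 1" "int y" "int y'"]
  by (simp add: sq_level_eq)

lemma sq_level_eq_0: "x < b \<Longrightarrow> sq_level a b (x, y) = 0 \<Longrightarrow> y = a"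
  using sq_level_inj[of x "b - 1" y a] by (simp add: sq_level_eq of_nat_diff b_pos)

lemma sq_level_shift: "sq_level a b (x, y + t) = sq_level a b (x, y) + int b * int t"
  unfolding sq_level_eq by (simp add: algebra_simps)

lemma mem_Lset_iff: "h \<in> Lset a b \<pi> \<longleftrightarrow>
    (\<exists>x y. x < b \<and> y < a \<and> row ! y \<le> x \<and> 0 < sq_level a b (x, y) \<and> int h = sq_level a b (x, y))"
  unfolding Lset_def using in_diagram_iff by (auto simp: not_less) force+

lemma Lset_pos: "h \<in> Lset a b \<pi> \<Longrightarrow> 0 < h"
  unfolding mem_Lset_iff by auto

lemma finite_Lset: "finite (Lset a b \<pi>)"
proof -
  have "Lset a b \<pi> \<subseteq> (\<lambda>(x, y). nat (sq_level a b (x, y))) ` ({..<b} \<times> {..<a})"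
    unfolding Lset_def by auto
  thus ?thesis by (rule finite_subset) auto
qed

lemma north_step_sq_level_in_Lset:
  assumes k: "k < a + b" and north: "path ! k" and i: "int i = sq_level a b (point path k)"
  shows "i \<in> Lset a b \<pi>"
proof -
  obtain y where y: "y < a" "k = row ! y + y" using nth_path k north by blast
  hence i_eq: "int i = sq_level a b (row ! y, y)"
    using i point_path[of k] k north_count_north_pos by simp
  have "row ! y < b"
  proof (rule ccontr)
    assume "\<not> row ! y < b"
    hence "row ! y = b" using row_le_b[OF y(1)] by simp
    moreover have "int b * int y < int b * int a" using y(1) b_pos by simp
    ultimately have "sq_level a b (row ! y, y) < 0" unfolding sq_level_eq by (simp add: algebra_simps)
    thus False using i_eq by simp
  qed
  moreover have "sq_level a b (row ! y, y) \<noteq> 0" using sq_level_eq_0 calculation y(1) by blast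
  ultimately show ?thesis
    unfolding mem_Lset_iff using y(1) i_eq by (intro exI[of _ "row ! y"] exI[of _ y]) simp
qed

(* the squares directly north of the east steps, i.e. the lowest square of each column above the path *)
definition column_bottom_levels :: "nat set" where
  "column_bottom_levels = {i. \<exists>k<a + b. \<not> path ! k \<and> int i = sq_level a b (point path k)}"

lemma column_bottom_shift_notin_Lset:
  assumes "i \<in> column_bottom_levels"
  shows "i + b * t \<notin> Lset a b \<pi>"
proof
  obtain k where k: "k < a + b" "\<not> path ! k" and i: "int i = sq_level a b (point path k)"
    using assms unfolding column_bottom_levels_def by blast
  define x where "x = k - north_count k"
  have x: "x < b" using east_step_column_lt_b[OF k] x_def by simp
  have shifted: "int (i + b * t) = sq_level a b (x, north_count k + t)"
    using i point_path[of k] k x_def by (simp add: sq_level_shift)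
  assume "i + b * t \<in> Lset a b \<pi>"
  then obtain x' y' where "x' < b" "y' < a" "row ! y' \<le> x'" "int (i + b * t) = sq_level a b (x', y')"
    unfolding mem_Lset_iff by blast
  moreover have "x = x'" "north_count k + t = y'"
    using sq_level_inj[OF x \<open>x' < b\<close>] shifted calculation(4) by simp_all
  ultimately show False
    using east_step_in_row[OF k] row_mono[of "north_count k" y'] x_def by simp
qed

lemma column_bottom_shift_unique:
  assumes "i1 \<in> column_bottom_levels" "i2 \<in> column_bottom_levels" "i1 + b * t1 = i2 + b * t2"
  shows "i1 = i2"
proof -
  obtain k1 where k1: "k1 < a + b" "\<not> path ! k1" "int i1 = sq_level a b (point path k1)"
    using assms(1) unfolding column_bottom_levels_def by blast
  obtain k2 where k2: "k2 < a + b" "\<not> path ! k2" "int i2 = sq_level a b (point path k2)"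
    using assms(2) unfolding column_bottom_levels_def by blast
  have "sq_level a b (k1 - north_count k1, north_count k1 + t1)
      = sq_level a b (k2 - north_count k2, north_count k2 + t2)"
    using k1 k2 point_path[of k1] point_path[of k2] assms(3)
    by (simp add: sq_level_shift flip: of_nat_mult of_nat_add)
  hence "k1 - north_count k1 = k2 - north_count k2"
    using sq_level_inj east_step_column_lt_b k1 k2 by blast
  hence "k1 = k2" using east_step_column_inj k1 k2 by blast
  thus ?thesis using k1 k2 by simp
qed

lemma notin_Lset_imp_column_bottom_shift:
  assumes m: "m \<notin> Lset a b \<pi>"
  shows "\<exists>i\<in>column_bottom_levels. \<exists>t. m = i + b * t"
proof -
  \<comment> \<open>m is the level of a square (X, Y) of some column X < b; compare Y with the height of the
    east step in column X\<close>
  obtain X Y where X: "X < b" and Y: "int m = int b * Y - int a * (int X + 1)"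
    using coprime_level_surj[OF coprime b_pos] .
  obtain k where k: "k < a + b" "\<not> path ! k" and col: "k - north_count k = X"
    using east_step_column_surj[OF X] .
  define c where "c = north_count k"
  have pt: "point path k = (X, c)" using point_path[of k] k col c_def by simp
  show ?thesis
  proof (cases "Y < int c")
    case True
    have "0 < int a * (int X + 1)" using a_pos by simp
    hence "0 < int b * Y" using Y by linarith
    hence "0 < Y" using b_pos by (simp add: zero_less_mult_iff)
    define y where "y = nat Y"
    have y: "y < c" "int m = sq_level a b (X, y)"
      using True \<open>0 < Y\<close> Y unfolding y_def sq_level_eq by simp_all
    have "y < a" using y(1) north_count_le_a[of k] c_def by simp
    moreover have "row ! y \<le> X" using row_below_east_step[of y k] y(1) col c_def by simp
    moreover have "sq_level a b (X, y) \<noteq> 0" using sq_level_eq_0[OF X] \<open>y < a\<close> by auto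
    ultimately have "m \<in> Lset a b \<pi>"
      unfolding mem_Lset_iff using X y(2) by (intro exI[of _ X] exI[of _ y]) simp
    with m show ?thesis by contradiction
  next
    case False
    define i where "i = nat (sq_level a b (X, c))"
    have i: "int i = sq_level a b (point path k)"
      using east_step_sq_level_nonneg[OF k] pt i_def by simp
    hence "i \<in> column_bottom_levels" unfolding column_bottom_levels_def using k by blast
    moreover have "int m = int i + int b * int (nat (Y - int c))"
      using i pt Y False by (simp add: sq_level_eq algebra_simps)
    hence "m = i + b * nat (Y - int c)" by (metis of_nat_add of_nat_mult of_nat_eq_iff)
    ultimately show ?thesis by blast
  qed
qed

lemma notin_Lset_iff: "m \<notin> Lset a b \<pi> \<longleftrightarrow> (\<exists>i\<in>column_bottom_levels. \<exists>t. m = i + b * t)"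
  using notin_Lset_imp_column_bottom_shift column_bottom_shift_notin_Lset by blast

(* the positions i of the letters z_i that are kept in the subword y *)
definition y_index :: "nat set" where
  "y_index = {i. int i + int a \<in> step_levels a b \<pi>}"

lemma mem_y_index_iff: "i \<in> y_index \<longleftrightarrow> (\<exists>k<a + b. int i = sq_level a b (point path k))"
  unfolding y_index_def step_levels_def length_path sq_level_eq_level by auto

lemma finite_y_index: "finite y_index"
proof -
  have "y_index \<subseteq> (\<lambda>k. nat (sq_level a b (point path k))) ` {..<a + b}"
  proof
    fix i assume "i \<in> y_index"
    then obtain k where "k < a + b" "int i = sq_level a b (point path k)"
      unfolding mem_y_index_iff by blast
    thus "i \<in> (\<lambda>k. nat (sq_level a b (point path k))) ` {..<a + b}"
      by (intro image_eqI[of _ _ k]) auto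
  qed
  thus ?thesis by (rule finite_subset) simp
qed

lemma y_index_notin_Lset: "{i \<in> y_index. i \<notin> Lset a b \<pi>} = column_bottom_levels"
proof (intro equalityI subsetI)
  fix i assume "i \<in> {i \<in> y_index. i \<notin> Lset a b \<pi>}"
  then obtain k where "k < a + b" "int i = sq_level a b (point path k)" "i \<notin> Lset a b \<pi>"
    unfolding mem_y_index_iff by blast
  thus "i \<in> column_bottom_levels"
    unfolding column_bottom_levels_def using north_step_sq_level_in_Lset by blast
next
  fix i assume i: "i \<in> column_bottom_levels"
  hence "i \<in> y_index" unfolding column_bottom_levels_def mem_y_index_iff by blast
  moreover have "i \<notin> Lset a b \<pi>" using column_bottom_shift_notin_Lset[OF i, of 0] by simp
  ultimately show "i \<in> {i \<in> y_index. i \<notin> Lset a b \<pi>}" by simp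
qed

lemma zword_iff_Lset: "zword a b \<pi> i \<longleftrightarrow> i \<in> Lset a b \<pi>"
  unfolding zword_def using Lset_pos by blast

lemma card_east_letters_before:
  "card {i \<in> y_index. i < h \<and> \<not> zword a b \<pi> i}
     = card {m. m < h \<and> h \<le> m + b \<and> m \<notin> Lset a b \<pi>}"
proof -
  have "{i \<in> y_index. i < h \<and> \<not> zword a b \<pi> i} = {i \<in> column_bottom_levels. i < h}"
    using y_index_notin_Lset zword_iff_Lset by blast
  thus ?thesis
    using card_window_shift[OF b_pos column_bottom_shift_unique, where h = h] by (simp add: notin_Lset_iff)
qed

lemma y_index_north_letters:
  "{h \<in> y_index. zword a b \<pi> h} = {h \<in> Lset a b \<pi>. int h \<in> east_levels a b \<pi>}"
proof (intro equalityI subsetI)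
  fix h assume "h \<in> {h \<in> y_index. zword a b \<pi> h}"
  then obtain k where k: "k < a + b" "int h = sq_level a b (point path k)" and L: "h \<in> Lset a b \<pi>"
    unfolding mem_y_index_iff zword_iff_Lset by blast
  have "path ! k" using y_index_notin_Lset L k unfolding column_bottom_levels_def by blast
  thus "h \<in> {h \<in> Lset a b \<pi>. int h \<in> east_levels a b \<pi>}"
    using k L unfolding east_levels_def length_path by auto
next
  fix h assume "h \<in> {h \<in> Lset a b \<pi>. int h \<in> east_levels a b \<pi>}"
  thus "h \<in> {h \<in> y_index. zword a b \<pi> h}"
    unfolding east_levels_def length_path mem_y_index_iff zword_iff_Lset by auto
qed

lemma f_map_partition: "is_partition (f_map a b \<pi>)"
  and set_first_col_hooks_f_map: "set (first_col_hooks (f_map a b \<pi>)) = Lset a b \<pi>"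
  using the_partition_first_col_hooks[OF finite_Lset] Lset_pos unfolding f_map_def by blast+

theorem rho_tilde_f_tilde_eq_rho_AHJ: "rho_tilde_f_tilde a b \<pi> = rho_AHJ a b \<pi> (f_map a b \<pi>)"
proof -
  let ?L = "Lset a b \<pi>" and ?H = "{h \<in> Lset a b \<pi>. int h \<in> east_levels a b \<pi>}"
  define F where "F h = card {m. m < h \<and> h \<le> m + b \<and> m \<notin> ?L}" for h
  have north_letters: "filter (zword a b \<pi>) (sorted_list_of_set y_index) = sorted_list_of_set ?H"
    using sorted_list_of_set_filter[OF finite_y_index] y_index_north_letters by metis
  have east_counts: "(\<lambda>h. card {i \<in> y_index. i < h \<and> \<not> zword a b \<pi> i}) = F"
    unfolding F_def card_east_letters_before ..
  have "rho_tilde_f_tilde a b \<pi> = ptn (map (zword a b \<pi>) (sorted_list_of_set y_index))"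
    unfolding rho_tilde_f_tilde_def yword_def y_index_def ..
  also have "\<dots> = normalize (map F (sorted_list_of_set ?H))"
    using ptn_map_sorted[of "sorted_list_of_set y_index"] finite_y_index north_letters east_counts
    by simp
  also have "\<dots> = rho_AHJ a b \<pi> (f_map a b \<pi>)"
  proof -
    let ?\<nu> = "f_map a b \<pi>"
    have "mset (map F (sorted_list_of_set ?H)) = image_mset F (mset_set ?H)"
      by (simp add: mset_sorted_list_of_set)
    also have "\<dots> = mset (map (\<lambda>i. card {j. j < ?\<nu> ! i \<and> hook ?\<nu> i j \<le> b})
                          (filter (\<lambda>i. int (hook ?\<nu> i 0) \<in> east_levels a b \<pi>) [0..<length ?\<nu>]))"
      using mset_row_hook_counts[OF f_map_partition, where P = "\<lambda>h. int h \<in> east_levels a b \<pi>"]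
      unfolding F_def set_first_col_hooks_f_map by (rule sym)
    finally show ?thesis unfolding rho_AHJ_def by (rule normalize_eq_if_mset_eq)
  qed
  finally show ?thesis .
qed

end

theorem mainTheorem8:
  fixes a b :: nat and \<pi> :: "nat list"
  assumes "0 < a" and "0 < b" and "coprime a b"
    and "\<pi> \<in> Dset a b"
  shows "rho_tilde_f_tilde a b \<pi> = rho_AHJ a b \<pi> (f_map a b \<pi>)"
proof -
  interpret rational_Dyck_path a b \<pi> using assms by unfold_locales
  show ?thesis by (rule rho_tilde_f_tilde_eq_rho_AHJ)
qed

end
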